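(* Let $X$ be a topological space, $Y$ a metric space, $\alpha\ge 1$ a countable ordinal, and $f:X\to Y$ a Baire-$\alpha$ function. Then there exists a sequence $(G_n)_{n=1}^{\infty}$ of $\Sigma_\alpha$ subsets of $X\times Y$ such that $\bigcap_{n=1}^{\infty}G_n=gr(f)$ and $diam(G_n(x))\to 0$ as $n\to\infty$ for each $x\in X$. Furthermore, if $Y$ is a Fréchet space (with its translation invariant metric), the sets $G_n$ can be chosen to be $\Sigma_\alpha$-strips.
   Context: Borel classes in a topological space: a set is in $\Sigma_1$ iff it is open; for a countable ordinal $\alpha\ge1$, a set is in $\Pi_\alpha$ iff its complement is in $\Sigma_\alpha$; for $\alpha>1$, a set is in $\Sigma_\alpha$ iff it is a countable union $\bigcup_i A_i$ with each $A_i\in\Pi_{\alpha_i}$ for some $\alpha_i<\alpha$. Baire classes: Baire-0 functions are the continuous ones; for $\alpha\ge1$, a function is Baire-$\alpha$ if it is the pointwise limit of a sequence of functions $f_n$, each Baire-$\alpha_n$ with $\alpha_n<\alpha$. $gr(f)=\{(x,f(x)):x\in X\}$. For $G\subseteq X\times Y$ and $x\in X$, $G(x)=\{y\in Y:(x,y)\in G\}$; diameters are with respect to the metric of $Y$. A Fréchet space is a locally convex topological vector space that is complete with respect to a translation invariant metric. If $Y$ is a Fréchet space, a $\Sigma_\alpha$-strip is a $\Sigma_\alpha$ set $S\subseteq X\times Y$ such that $S(x)$ is convex for every $x\in X$. *)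

theory Defs
  imports "HOL-Analysis.Analysis"
begin

text \<open>Ordinals are represented by elements of an arbitrary well-ordered type 'o;
  the least element plays the role of 0, its successor the role of 1.\<close>

definition ord_zero :: "'o::wellorder \<Rightarrow> bool" where
  "ord_zero \<alpha> \<longleftrightarrow> (\<forall>\<beta>. \<alpha> \<le> \<beta>)"

definition ord_one :: "'o::wellorder \<Rightarrow> bool" where
  "ord_one \<alpha> \<longleftrightarrow> \<not> ord_zero \<alpha> \<and> (\<forall>\<beta><\<alpha>. ord_zero \<beta>)"

definition countable_ordinal :: "'o::wellorder \<Rightarrow> bool" where
  "countable_ordinal \<alpha> \<longleftrightarrow> countable {\<beta>. \<beta> < \<alpha>}"

inductive borel_Sigma :: "'o::wellorder \<Rightarrow> 'a::topological_space set \<Rightarrow> bool" where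
  Sigma_one: "ord_one \<alpha> \<Longrightarrow> open A \<Longrightarrow> borel_Sigma \<alpha> A"
| Sigma_step: "\<not> ord_zero \<alpha> \<Longrightarrow> \<not> ord_one \<alpha> \<Longrightarrow>
     (\<forall>i::nat. \<exists>\<beta><\<alpha>. borel_Sigma \<beta> (- A i)) \<Longrightarrow> borel_Sigma \<alpha> (\<Union>i. A i)"

definition borel_Pi :: "'o::wellorder \<Rightarrow> 'a::topological_space set \<Rightarrow> bool" where
  "borel_Pi \<alpha> A \<longleftrightarrow> borel_Sigma \<alpha> (- A)"

inductive baire_class :: "'o::wellorder \<Rightarrow> ('a::topological_space \<Rightarrow> 'b::metric_space) \<Rightarrow> bool" where
  baire_zero: "ord_zero \<alpha> \<Longrightarrow> continuous_on UNIV f \<Longrightarrow> baire_class \<alpha> f"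
| baire_step: "\<not> ord_zero \<alpha> \<Longrightarrow> (\<forall>n::nat. \<exists>\<beta><\<alpha>. baire_class \<beta> (F n)) \<Longrightarrow>
     (\<forall>x. (\<lambda>n. F n x) \<longlonglongrightarrow> f x) \<Longrightarrow> baire_class \<alpha> f"

definition graph :: "('a \<Rightarrow> 'b) \<Rightarrow> ('a \<times> 'b) set" where
  "graph f = {(x, f x) | x. True}"

definition xsection :: "('a \<times> 'b) set \<Rightarrow> 'a \<Rightarrow> 'b set" where
  "xsection G x = {y. (x, y) \<in> G}"

text \<open>Diameter with values in [0,\<infinity>] (unbounded sets have diameter \<infinity>).\<close>
definition diam :: "'b::metric_space set \<Rightarrow> ennreal" where
  "diam S = (SUP p\<in>S \<times> S. ennreal (dist (fst p) (snd p)))"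

text \<open>Real Frechet space: locally convex topological vector space whose topology is given by a
  complete translation invariant metric (the metric of the type).\<close>
definition frechet_space :: "'b::{real_vector, complete_space} itself \<Rightarrow> bool" where
  "frechet_space _ \<longleftrightarrow>
     (\<forall>x y z::'b. dist (x + z) (y + z) = dist x y) \<and>
     continuous_on UNIV (\<lambda>p::'b \<times> 'b. fst p + snd p) \<and>
     continuous_on UNIV (\<lambda>p::real \<times> 'b. fst p *\<^sub>R snd p) \<and>
     (\<forall>U x. open U \<and> (x::'b) \<in> U \<longrightarrow> (\<exists>V. open V \<and> convex V \<and> x \<in> V \<and> V \<subseteq> U))"

definition Sigma_strip :: "'o::wellorder \<Rightarrow> ('a::topological_space \<times> 'b::{real_vector, metric_space}) set \<Rightarrow> bool" where
  "Sigma_strip \<alpha> S \<longleftrightarrow> borel_Sigma \<alpha> S \<and> (\<forall>x. convex (xsection S x))"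

end

(* Write f as the pointwise limit of functions F n of Baire class below alpha.  By induction on
   the Baire class, preimages of open sets under such functions are Sigma_alpha: g x lies in an
   open set U iff from some index on the values F n x keep a fixed distance from the complement
   of U.  Hence G n = {(x, y). dist (F (n + k) x) y < 1/(n+1) for some k} is Sigma_alpha, contains
   the graph of f, and its sections shrink to f x.

   In a Frechet space take instead the sections conv {F k x | k >= n} + V n, where V n is a convex
   open neighbourhood of 0 inside the ball of radius 1/(n+1).  They are convex, and since V n is
   open the convex combinations may be restricted to rational weights, which makes G n a countable
   union of preimages of V n under the Baire maps (x, y) |-> y - (sum of q k *R F k x). *)

theory Submission
  imports Defs
begin

section \<open>Borel and Baire classes\<close>

lemma not_ord_zero_if_less: "(\<beta>::'o::wellorder) < \<alpha> \<Longrightarrow> \<not> ord_zero \<alpha>"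
  unfolding ord_zero_def using not_le by blast

lemma ex_ord_zero_less:
  assumes "\<not> ord_zero (\<alpha>::'o::wellorder)"
  obtains z where "z < \<alpha>" "ord_zero z"
proof -
  have z: "ord_zero (LEAST z::'o. True)"
    unfolding ord_zero_def by (auto intro: Least_le)
  moreover have "(LEAST z::'o. True) < \<alpha>"
    using z assms unfolding ord_zero_def by (metis order.order_iff_strict)
  ultimately show thesis
    by (rule that[rotated])
qed

lemma ex_ord_one_less:
  assumes "\<not> ord_zero (\<alpha>::'o::wellorder)" "\<not> ord_one \<alpha>"
  obtains \<gamma> where "\<gamma> < \<alpha>" "ord_one \<gamma>"
proof -
  obtain \<beta> where \<beta>: "\<beta> < \<alpha>" "\<not> ord_zero \<beta>"
    using assms unfolding ord_one_def by blast
  define \<gamma> :: 'o where "\<gamma> = (LEAST \<gamma>. \<not> ord_zero \<gamma>)"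
  have "\<not> ord_zero \<gamma>"
    unfolding \<gamma>_def by (rule LeastI) (rule \<beta>(2))
  moreover have "\<gamma> \<le> \<beta>"
    unfolding \<gamma>_def by (rule Least_le) (rule \<beta>(2))
  moreover have "\<forall>\<delta><\<gamma>. ord_zero \<delta>"
    unfolding \<gamma>_def using not_less_Least by blast
  ultimately show thesis
    using that[of \<gamma>] \<beta>(1) unfolding ord_one_def by (meson le_less_trans)
qed

lemma borel_Sigma_empty:
  assumes "\<not> ord_zero \<alpha>"
  shows "borel_Sigma \<alpha> ({} :: 'a::topological_space set)"
proof (cases "ord_one \<alpha>")
  case True
  then show ?thesis by (simp add: Sigma_one)
next
  case False
  then obtain \<gamma> where "\<gamma> < \<alpha>" "ord_one \<gamma>"
    using assms ex_ord_one_less by blast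
  then have "borel_Sigma \<alpha> (\<Union>i::nat. {} :: 'a set)"
    using assms False by (intro Sigma_step) (auto intro: Sigma_one)
  then show ?thesis by simp
qed

lemma borel_Sigma_UN:
  fixes A :: "nat \<Rightarrow> 'a::topological_space set"
  assumes "\<not> ord_zero \<alpha>" and A: "\<And>i. borel_Sigma \<alpha> (A i)"
  shows "borel_Sigma \<alpha> (\<Union>i. A i)"
proof (cases "ord_one \<alpha>")
  case True
  have "open (A i)" for i
    using A[of i]
  proof cases
    case Sigma_step
    then show ?thesis using True by simp
  qed simp
  then show ?thesis by (intro Sigma_one[OF True] open_UN) simp
next
  case False
  have "\<forall>i. \<exists>B. A i = (\<Union>j::nat. B j) \<and> (\<forall>j. \<exists>\<beta><\<alpha>. borel_Sigma \<beta> (- B j))"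
  proof
    fix i
    show "\<exists>B. A i = (\<Union>j::nat. B j) \<and> (\<forall>j. \<exists>\<beta><\<alpha>. borel_Sigma \<beta> (- B j))"
      using A[of i] False by cases auto
  qed
  then obtain B :: "nat \<Rightarrow> nat \<Rightarrow> 'a set"
    where B: "\<forall>i. A i = (\<Union>j. B i j) \<and> (\<forall>j. \<exists>\<beta><\<alpha>. borel_Sigma \<beta> (- B i j))"
    by metis
  then have "(\<Union>i. A i) = (\<Union>p. case_prod B p)"
    by auto
  also have "\<dots> = (\<Union>m. case_prod B (prod_decode m))"
    by (metis image_image surj_prod_decode)
  also have "borel_Sigma \<alpha> \<dots>"
    using assms(1) False B by (intro Sigma_step) (auto split: prod.split)
  finally show ?thesis .
qed

lemma borel_Sigma_UN_countable:
  assumes "\<not> ord_zero \<alpha>" "countable I" "\<And>i. i \<in> I \<Longrightarrow> borel_Sigma \<alpha> (A i)"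
  shows "borel_Sigma \<alpha> (\<Union>i\<in>I. A i)"
proof (cases "I = {}")
  case True
  then show ?thesis using borel_Sigma_empty[OF assms(1)] by simp
next
  case False
  then have "(\<Union>i\<in>I. A i) = (\<Union>n. A (from_nat_into I n))"
    using range_from_nat_into[OF False assms(2)] by (metis image_image)
  also have "borel_Sigma \<alpha> \<dots>"
    using assms False by (intro borel_Sigma_UN) (auto intro: from_nat_into)
  finally show ?thesis .
qed

lemma baire_class_continuous:
  assumes "continuous_on UNIV g"
  shows "baire_class \<delta> g"
proof (cases "ord_zero \<delta>")
  case True
  then show ?thesis using assms by (rule baire_zero)
next
  case False
  then obtain z where "z < \<delta>" "ord_zero z"
    by (rule ex_ord_zero_less)
  moreover have "baire_class z g"
    using \<open>ord_zero z\<close> assms by (rule baire_zero)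
  ultimately show ?thesis
    using False by (intro baire_step[of _ "\<lambda>n. g"]) auto
qed

lemma baire_class_mono:
  assumes "baire_class \<gamma> g" "\<gamma> \<le> \<delta>"
  shows "baire_class \<delta> g"
proof (cases "\<gamma> = \<delta>")
  case False
  then have "\<gamma> < \<delta>" using assms(2) by simp
  then show ?thesis
    using assms(1) not_ord_zero_if_less by (intro baire_step[of _ "\<lambda>n. g"]) auto
qed (use assms in simp)

lemma baire_class_compose:
  assumes "baire_class \<beta> g" "continuous_on UNIV \<phi>"
  shows "baire_class \<beta> (\<lambda>x. \<phi> (g x))"
  using assms(1)
proof induction
  case (baire_zero \<alpha> f)
  then show ?case
    by (intro baire_class.baire_zero) (auto intro: continuous_on_compose2[OF assms(2)])
next
  case (baire_step \<alpha> F f)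
  have "(\<lambda>n. \<phi> (F n x)) \<longlonglongrightarrow> \<phi> (f x)" for x
    using baire_step.hyps(2) assms(2) by (auto intro: continuous_on_tendsto_compose)
  then show ?case
    using baire_step by (intro baire_class.baire_step[where F="\<lambda>n x. \<phi> (F n x)"]) blast+
qed

lemma baire_class_precompose:
  assumes "baire_class \<beta> g" "continuous_on UNIV \<psi>"
  shows "baire_class \<beta> (\<lambda>x. g (\<psi> x))"
  using assms(1)
proof induction
  case (baire_zero \<alpha> f)
  then show ?case
    by (intro baire_class.baire_zero) (auto intro: continuous_on_compose2[OF _ assms(2)])
next
  case (baire_step \<alpha> F f)
  then show ?case by (intro baire_class.baire_step[where F="\<lambda>n x. F n (\<psi> x)"]) blast+
qed

lemma baire_class_Pair:
  fixes g :: "'a::topological_space \<Rightarrow> 'b::metric_space" and h :: "'a \<Rightarrow> 'c::metric_space"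
  assumes "baire_class \<beta> g" "baire_class \<beta> h"
  shows "baire_class \<beta> (\<lambda>x. (g x, h x))"
  using assms
proof (induction \<beta> arbitrary: g h rule: less_induct)
  case (less \<beta>)
  show ?case
  proof (cases "ord_zero \<beta>")
    case True
    then have "continuous_on UNIV g" "continuous_on UNIV h"
      using less.prems by (auto elim: baire_class.cases)
    then show ?thesis
      using True by (intro baire_zero continuous_on_Pair)
  next
    case False
    obtain G :: "nat \<Rightarrow> 'a \<Rightarrow> 'b" where G: "\<forall>n. \<exists>\<gamma><\<beta>. baire_class \<gamma> (G n)" "\<forall>x. (\<lambda>n. G n x) \<longlonglongrightarrow> g x"
      using less.prems(1) False by cases auto
    obtain H :: "nat \<Rightarrow> 'a \<Rightarrow> 'c" where H: "\<forall>n. \<exists>\<gamma><\<beta>. baire_class \<gamma> (H n)" "\<forall>x. (\<lambda>n. H n x) \<longlonglongrightarrow> h x"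
      using less.prems(2) False by cases auto
    have "\<exists>\<gamma><\<beta>. baire_class \<gamma> (\<lambda>x. (G n x, H n x))" for n
    proof -
      obtain \<gamma> \<gamma>' where "\<gamma> < \<beta>" "baire_class \<gamma> (G n)" "\<gamma>' < \<beta>" "baire_class \<gamma>' (H n)"
        using G(1) H(1) by blast
      then show ?thesis
        by (metis baire_class_mono less.IH max.cobounded1 max.cobounded2 max_less_iff_conj)
    qed
    then show ?thesis
      using False G(2) H(2) by (intro baire_step) (auto intro: tendsto_Pair)
  qed
qed

lemma ex_common_baire_class:
  assumes "\<not> ord_zero \<alpha>" "finite K" "\<And>k. k \<in> K \<Longrightarrow> \<exists>\<beta><\<alpha>. baire_class \<beta> (F k)"
  shows "\<exists>\<delta><\<alpha>. \<forall>k\<in>K. baire_class \<delta> (F k)"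
  using assms(2,3)
proof (induction K rule: finite_induct)
  case empty
  obtain z where "z < \<alpha>"
    using ex_ord_zero_less[OF assms(1)] by blast
  then show ?case by blast
next
  case (insert k K)
  then obtain \<delta> \<beta> where "\<delta> < \<alpha>" "\<forall>k\<in>K. baire_class \<delta> (F k)" "\<beta> < \<alpha>" "baire_class \<beta> (F k)"
    by blast
  then show ?case
    by (intro exI[of _ "max \<delta> \<beta>"]) (auto intro: baire_class_mono)
qed

section \<open>Preimages of open sets under Baire functions\<close>

lemma vimage_open_eq_limit:
  fixes F :: "nat \<Rightarrow> 'a \<Rightarrow> 'b::metric_space"
  assumes "open U" and lim: "\<And>x. (\<lambda>n. F n x) \<longlonglongrightarrow> g x"
  shows "g -` U = (\<Union>m. \<Union>N. \<Inter>k. F (N + k) -` (\<Inter>z\<in>-U. {y. inverse (real (Suc m)) \<le> dist y z}))"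
proof (intro equalityI subsetI)
  fix x assume "x \<in> g -` U"
  then obtain e where e: "e > 0" "ball (g x) e \<subseteq> U"
    using assms(1) open_contains_ball by blast
  obtain m where m: "inverse (real (Suc m)) < e / 2"
    using reals_Archimedean[of "e / 2"] e(1) by auto
  obtain N where N: "\<And>n. n \<ge> N \<Longrightarrow> dist (F n x) (g x) < e / 2"
    using lim[of x] e(1) unfolding tendsto_iff eventually_sequentially by (meson half_gt_zero)
  have "inverse (real (Suc m)) \<le> dist (F (N + k) x) z" if "z \<notin> U" for k z
  proof -
    have "e \<le> dist (g x) z" using e(2) that by (force simp: subset_eq)
    then show ?thesis
      using N[of "N + k"] m dist_triangle[of "g x" z "F (N + k) x"] by (simp add: dist_commute)
  qed
  then show "x \<in> (\<Union>m. \<Union>N. \<Inter>k. F (N + k) -` (\<Inter>z\<in>-U. {y. inverse (real (Suc m)) \<le> dist y z}))"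
    by blast
next
  fix x assume "x \<in> (\<Union>m. \<Union>N. \<Inter>k. F (N + k) -` (\<Inter>z\<in>-U. {y. inverse (real (Suc m)) \<le> dist y z}))"
  then obtain m N where "x \<in> (\<Inter>k. F (N + k) -` (\<Inter>z\<in>-U. {y. inverse (real (Suc m)) \<le> dist y z}))"
    by blast
  then have mN: "inverse (real (Suc m)) \<le> dist (F (N + k) x) z" if "z \<notin> U" for k z
    using that by simp
  have "inverse (real (Suc m)) > 0"
    by simp
  then obtain K where "\<forall>n\<ge>K. dist (F n x) (g x) < inverse (real (Suc m))"
    using lim[of x] unfolding tendsto_iff eventually_sequentially by blast
  then have "dist (F (N + K) x) (g x) < inverse (real (Suc m))"
    by simp
  then show "x \<in> g -` U"
    using mN[of "g x" K] by fastforce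
qed

lemma borel_Sigma_vimage_open_of_limit:
  fixes F :: "nat \<Rightarrow> 'a::topological_space \<Rightarrow> 'b::metric_space"
  assumes "\<beta> < \<alpha>" "\<not> ord_zero \<beta>"
    and F: "\<And>n V. open V \<Longrightarrow> borel_Sigma \<beta> (F n -` V)"
    and lim: "\<And>x. (\<lambda>n. F n x) \<longlonglongrightarrow> g x" and "open U"
  shows "borel_Sigma \<alpha> (g -` U)"
proof -
  define C where "C m = (\<Inter>z\<in>-U. {y. inverse (real (Suc m)) \<le> dist y z})" for m
  have "closed (C m)" for m
    unfolding C_def by (intro closed_INT ballI closed_Collect_le continuous_intros)
  then have "borel_Sigma \<beta> (\<Union>k. F (N + k) -` (- C m))" for m N
    using F by (intro borel_Sigma_UN[OF assms(2)]) (simp add: open_Compl)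
  then have "borel_Sigma \<beta> (- (\<Inter>k. F (N + k) -` C m))" for m N
    by (simp add: vimage_Compl)
  moreover have \<alpha>: "\<not> ord_zero \<alpha>" "\<not> ord_one \<alpha>"
    using assms(1,2) not_ord_zero_if_less unfolding ord_one_def by auto
  ultimately have "borel_Sigma \<alpha> (\<Union>N. \<Inter>k. F (N + k) -` C m)" for m
    using assms(1) by (intro Sigma_step) blast+
  then have "borel_Sigma \<alpha> (\<Union>m. \<Union>N. \<Inter>k. F (N + k) -` C m)"
    by (rule borel_Sigma_UN[OF \<alpha>(1)])
  then show ?thesis
    unfolding vimage_open_eq_limit[OF \<open>open U\<close> lim] C_def .
qed

lemma baire_class_vimage_open:
  fixes g :: "'a::topological_space \<Rightarrow> 'b::metric_space"
  assumes "baire_class \<beta> g" "\<beta> < \<alpha>" "open U"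
  shows "borel_Sigma \<alpha> (g -` U)"
  using assms
proof (induction arbitrary: \<alpha> U)
  case (baire_zero \<beta> g)
  have g_open: "open (g -` V)" if "open V" for V
    using baire_zero.hyps(2) that by (intro open_vimage)
  show ?case
  proof (cases "ord_one \<alpha>")
    case True
    then show ?thesis using g_open[OF baire_zero.prems(2)] by (rule Sigma_one)
  next
    case False
    \<comment> \<open>Open sets need not be Sigma_alpha for alpha > 1 in a general space, but preimages of
      open sets under continuous maps into a metric space are: view g as the limit of a constant
      sequence.\<close>
    then obtain \<gamma> where \<gamma>: "\<gamma> < \<alpha>" "ord_one \<gamma>"
      using ex_ord_one_less not_ord_zero_if_less[OF baire_zero.prems(1)] by blast
    have "borel_Sigma \<gamma> (g -` V)" if "open V" for V
      using \<gamma>(2) g_open[OF that] by (rule Sigma_one)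
    moreover have "\<not> ord_zero \<gamma>"
      using \<gamma>(2) unfolding ord_one_def by blast
    ultimately show ?thesis
      using borel_Sigma_vimage_open_of_limit[where F="\<lambda>n. g", OF \<gamma>(1)] baire_zero.prems(2) by blast
  qed
next
  case (baire_step \<beta> F g)
  have "borel_Sigma \<beta> (F n -` V)" if "open V" for n V
    using baire_step.IH that by blast
  from borel_Sigma_vimage_open_of_limit[OF baire_step.prems(1) baire_step.hyps(1) this
      baire_step.hyps(2)[rule_format] baire_step.prems(2)]
  show ?case .
qed

section \<open>Sets shrinking to a graph\<close>

lemma Inter_eq_graphI:
  assumes "\<And>n x. (x, f x) \<in> G n"
    and "\<And>x e. e > 0 \<Longrightarrow> \<forall>\<^sub>F n in sequentially. xsection (G n) x \<subseteq> ball (f x) e"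
  shows "(\<Inter>n. G n) = graph f"
proof
  show "graph f \<subseteq> (\<Inter>n. G n)"
    using assms(1) unfolding graph_def by blast
  show "(\<Inter>n. G n) \<subseteq> graph f"
  proof (clarify)
    fix x y assume xy: "(x, y) \<in> (\<Inter>n. G n)"
    have "y = f x"
    proof (rule ccontr)
      assume "y \<noteq> f x"
      then have "dist y (f x) > 0" by simp
      then have "\<forall>\<^sub>F n in sequentially. xsection (G n) x \<subseteq> ball (f x) (dist y (f x))"
        by (rule assms(2))
      then obtain n where "xsection (G n) x \<subseteq> ball (f x) (dist y (f x))"
        unfolding eventually_sequentially by blast
      moreover have "y \<in> xsection (G n) x"
        using xy unfolding xsection_def by blast
      ultimately have "y \<in> ball (f x) (dist y (f x))"
        by blast
      then show False
        by (simp add: dist_commute)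
    qed
    then show "(x, y) \<in> graph f"
      unfolding graph_def by blast
  qed
qed

lemma ennreal_tendsto_zeroI:
  fixes u :: "nat \<Rightarrow> ennreal"
  assumes "\<And>e. e > 0 \<Longrightarrow> \<forall>\<^sub>F n in sequentially. u n \<le> ennreal e"
  shows "u \<longlonglongrightarrow> 0"
proof (rule order_tendstoI)
  fix a :: ennreal assume "0 < a"
  then obtain r :: rat where r: "0 < real_of_rat r" "ennreal (real_of_rat r) < a"
    using ennreal_rat_dense[of 0 a] by auto
  show "\<forall>\<^sub>F n in sequentially. u n < a"
    using assms[OF r(1)] by eventually_elim (use r(2) in auto)
qed simp

lemma diam_xsection_tendsto_zero:
  assumes "\<And>e. e > 0 \<Longrightarrow> \<forall>\<^sub>F n in sequentially. xsection (G n) x \<subseteq> ball c e"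
  shows "(\<lambda>n. diam (xsection (G n) x)) \<longlonglongrightarrow> 0"
proof (rule ennreal_tendsto_zeroI)
  fix e :: real assume "e > 0"
  then have "\<forall>\<^sub>F n in sequentially. xsection (G n) x \<subseteq> ball c (e / 2)"
    by (intro assms) simp
  then show "\<forall>\<^sub>F n in sequentially. diam (xsection (G n) x) \<le> ennreal e"
  proof eventually_elim
    case (elim n)
    have "dist y z \<le> e" if "y \<in> xsection (G n) x" "z \<in> xsection (G n) x" for y z
    proof -
      have "dist y c < e / 2" "dist z c < e / 2"
        using elim that by (auto simp: dist_commute)
      then show ?thesis
        using dist_triangle2[of y z c] by linarith
    qed
    then show ?case
      unfolding diam_def by (auto intro!: SUP_least ennreal_leI)
  qed
qed

lemma borel_Sigma_dist_less_baire:
  fixes g :: "'a::topological_space \<Rightarrow> 'b::metric_space"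
  assumes "baire_class \<beta> g" "\<beta> < \<alpha>"
  shows "borel_Sigma \<alpha> {p. dist (g (fst p)) (snd p) < r}"
proof -
  have "baire_class \<beta> (\<lambda>p::'a \<times> 'b. (g (fst p), snd p))"
    by (intro baire_class_Pair baire_class_continuous baire_class_precompose[OF assms(1)]
        continuous_on_snd continuous_on_fst continuous_on_id)
  moreover have "open {q::'b \<times> 'b. dist (fst q) (snd q) < r}"
    by (rule open_Collect_less) (intro continuous_intros)+
  ultimately have "borel_Sigma \<alpha> ((\<lambda>p. (g (fst p), snd p)) -` {q. dist (fst q) (snd q) < r})"
    by (rule baire_class_vimage_open[OF _ assms(2)])
  then show ?thesis
    by (simp add: vimage_def)
qed

lemma eventually_tail_balls_subset_ball:
  fixes u :: "nat \<Rightarrow> 'b::metric_space"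
  assumes "u \<longlonglongrightarrow> l" "e > 0"
  shows "\<forall>\<^sub>F n in sequentially. (\<Union>k. ball (u (n + k)) (inverse (real (Suc n)))) \<subseteq> ball l e"
proof -
  obtain M where M: "\<And>k. k \<ge> M \<Longrightarrow> dist (u k) l < e / 2"
    using assms unfolding tendsto_iff eventually_sequentially by (meson half_gt_zero)
  obtain N where N: "inverse (real (Suc N)) < e / 2"
    using reals_Archimedean assms(2) by (metis half_gt_zero)
  have "(\<Union>k. ball (u (n + k)) (inverse (real (Suc n)))) \<subseteq> ball l e" if "n \<ge> max M N" for n
  proof
    fix y assume "y \<in> (\<Union>k. ball (u (n + k)) (inverse (real (Suc n))))"
    then obtain k where k: "dist (u (n + k)) y < inverse (real (Suc n))"
      by auto
    have "inverse (real (Suc n)) \<le> inverse (real (Suc N))"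
      using that by (simp add: field_simps)
    moreover have "dist l (u (n + k)) < e / 2"
      using M[of "n + k"] that by (simp add: dist_commute)
    moreover have "dist l y \<le> dist l (u (n + k)) + dist (u (n + k)) y"
      by (rule dist_triangle)
    ultimately have "dist l y < e"
      using k N by linarith
    then show "y \<in> ball l e"
      by simp
  qed
  then show ?thesis
    unfolding eventually_sequentially by blast
qed

lemma baire_class_Sigma_graph_approximation:
  fixes f :: "'a::topological_space \<Rightarrow> 'b::metric_space"
  assumes "\<not> ord_zero \<alpha>" "baire_class \<alpha> f"
  shows "\<exists>G :: nat \<Rightarrow> ('a \<times> 'b) set. (\<forall>n. borel_Sigma \<alpha> (G n)) \<and> (\<Inter>n. G n) = graph f \<and>
           (\<forall>x. (\<lambda>n. diam (xsection (G n) x)) \<longlonglongrightarrow> 0)"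
proof -
  obtain F :: "nat \<Rightarrow> 'a \<Rightarrow> 'b" where F: "\<forall>n. \<exists>\<beta><\<alpha>. baire_class \<beta> (F n)"
    and lim: "\<forall>x. (\<lambda>n. F n x) \<longlonglongrightarrow> f x"
    using assms(2,1) by cases auto
  define G where "G n = {p. snd p \<in> (\<Union>k. ball (F (n + k) (fst p)) (inverse (real (Suc n))))}" for n
  have xsection: "xsection (G n) x = (\<Union>k. ball (F (n + k) x) (inverse (real (Suc n))))" for n x
    unfolding G_def xsection_def by auto
  have Sigma: "borel_Sigma \<alpha> (G n)" for n
  proof -
    have "G n = (\<Union>k. {p. dist (F (n + k) (fst p)) (snd p) < inverse (real (Suc n))})"
      unfolding G_def by auto
    also have "borel_Sigma \<alpha> \<dots>"
      by (rule borel_Sigma_UN[OF assms(1)]) (use F borel_Sigma_dist_less_baire in blast)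
    finally show ?thesis .
  qed
  have graph: "(x, f x) \<in> G n" for n x
  proof -
    obtain K where "\<forall>k\<ge>K. dist (F k x) (f x) < inverse (real (Suc n))"
      using lim unfolding tendsto_iff eventually_sequentially by (meson inverse_Suc)
    then have "f x \<in> ball (F (n + K) x) (inverse (real (Suc n)))"
      by simp
    then show ?thesis
      unfolding G_def by auto
  qed
  have shrink: "\<forall>\<^sub>F n in sequentially. xsection (G n) x \<subseteq> ball (f x) e" if "e > 0" for x e
    unfolding xsection by (rule eventually_tail_balls_subset_ball[OF lim[rule_format] that])
  show ?thesis
  proof (intro exI conjI allI)
    show "borel_Sigma \<alpha> (G n)" for n
      by (rule Sigma)
    show "(\<Inter>n. G n) = graph f"
      using graph shrink by (rule Inter_eq_graphI)
    show "(\<lambda>n. diam (xsection (G n) x)) \<longlonglongrightarrow> 0" for x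
      using shrink by (rule diam_xsection_tendsto_zero)
  qed
qed

section \<open>Convex strips in Frechet spaces\<close>

text \<open>The class real_vector does not make the vector operations continuous for the metric, so
  continuity of addition and scaling enters the following lemmas as hypotheses.\<close>

lemma tendsto_continuous_on_Pair:
  assumes "continuous_on UNIV \<phi>" "(u \<longlongrightarrow> a) F" "(v \<longlongrightarrow> b) F"
  shows "((\<lambda>j. \<phi> (u j, v j)) \<longlongrightarrow> \<phi> (a, b)) F"
  using continuous_on_tendsto_compose[OF assms(1) tendsto_Pair[OF assms(2,3)]] by simp

lemma continuous_on_diff_of_add_scaleR:
  assumes add: "continuous_on UNIV (\<lambda>p::'c::{real_vector,topological_space} \<times> 'c. fst p + snd p)"
    and scale: "continuous_on UNIV (\<lambda>p::real \<times> 'c. fst p *\<^sub>R snd p)"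
  shows "continuous_on UNIV (\<lambda>p::'c \<times> 'c. fst p - snd p)"
proof -
  have "continuous_on UNIV (\<lambda>p::'c \<times> 'c. (-1::real, snd p))"
    by (intro continuous_intros)
  from continuous_on_compose2[OF scale this]
  have "continuous_on UNIV (\<lambda>p::'c \<times> 'c. - snd p)"
    by simp
  then have "continuous_on UNIV (\<lambda>p::'c \<times> 'c. (fst p, - snd p))"
    by (intro continuous_intros)
  from continuous_on_compose2[OF add this]
  show ?thesis by simp
qed

lemma tendsto_sum_scaleR:
  fixes a :: "'i \<Rightarrow> 'c::{real_vector,topological_space}"
  assumes add: "continuous_on UNIV (\<lambda>p::'c \<times> 'c. fst p + snd p)"
    and scale: "continuous_on UNIV (\<lambda>p::real \<times> 'c. fst p *\<^sub>R snd p)"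
    and "finite J" "\<And>k. k \<in> J \<Longrightarrow> ((\<lambda>j. c j k) \<longlongrightarrow> d k) F"
  shows "((\<lambda>j. \<Sum>k\<in>J. c j k *\<^sub>R a k) \<longlongrightarrow> (\<Sum>k\<in>J. d k *\<^sub>R a k)) F"
  using assms(3,4)
proof (induction J rule: finite_induct)
  case (insert k J)
  have "((\<lambda>j. c j k *\<^sub>R a k) \<longlongrightarrow> d k *\<^sub>R a k) F"
    using tendsto_continuous_on_Pair[OF scale, of "\<lambda>j. c j k"] insert.prems by simp
  then have "((\<lambda>j. c j k *\<^sub>R a k + (\<Sum>k\<in>J. c j k *\<^sub>R a k)) \<longlongrightarrow> d k *\<^sub>R a k + (\<Sum>k\<in>J. d k *\<^sub>R a k)) F"
    using tendsto_continuous_on_Pair[OF add] insert by simp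
  then show ?case using insert.hyps by simp
qed simp

lemma baire_class_sum_scaleR:
  fixes F :: "'i \<Rightarrow> 'a::topological_space \<Rightarrow> 'c::{real_vector,metric_space}"
  assumes add: "continuous_on UNIV (\<lambda>p::'c \<times> 'c. fst p + snd p)"
    and scale: "continuous_on UNIV (\<lambda>p::real \<times> 'c. fst p *\<^sub>R snd p)"
    and "finite J" "\<And>k. k \<in> J \<Longrightarrow> baire_class \<delta> (F k)"
  shows "baire_class \<delta> (\<lambda>x. \<Sum>k\<in>J. c k *\<^sub>R F k x)"
  using assms(3,4)
proof (induction J rule: finite_induct)
  case empty
  then show ?case by (simp add: baire_class_continuous)
next
  case (insert k J)
  have "baire_class \<delta> (\<lambda>x. (c k, F k x))"
    using baire_class_Pair[OF baire_class_continuous[OF continuous_on_const] insert.prems[of k]] by simp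
  then have "baire_class \<delta> (\<lambda>x. c k *\<^sub>R F k x)"
    using baire_class_compose[OF _ scale] by fastforce
  then have "baire_class \<delta> (\<lambda>x. (c k *\<^sub>R F k x, \<Sum>k\<in>J. c k *\<^sub>R F k x))"
    using insert by (intro baire_class_Pair) auto
  then have "baire_class \<delta> (\<lambda>x. c k *\<^sub>R F k x + (\<Sum>k\<in>J. c k *\<^sub>R F k x))"
    using baire_class_compose[OF _ add] by fastforce
  then show ?case using insert.hyps by simp
qed

lemma floor_scaled_LIMSEQ: "(\<lambda>j. of_int \<lfloor>real (Suc j) * t\<rfloor> / real (Suc j)) \<longlonglongrightarrow> (t::real)"
proof (rule tendsto_sandwich[of "\<lambda>j. t - inverse (real (Suc j))" _ _ "\<lambda>j. t"])
  have "t - inverse (real (Suc j)) \<le> of_int \<lfloor>real (Suc j) * t\<rfloor> / real (Suc j)" for j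
  proof -
    have "t - inverse (real (Suc j)) = (real (Suc j) * t - 1) / real (Suc j)"
      by (simp add: field_simps)
    also have "\<dots> \<le> of_int \<lfloor>real (Suc j) * t\<rfloor> / real (Suc j)"
      by (intro divide_right_mono) linarith+
    finally show ?thesis .
  qed
  then show "\<forall>\<^sub>F j in sequentially. t - inverse (real (Suc j)) \<le> of_int \<lfloor>real (Suc j) * t\<rfloor> / real (Suc j)"
    by simp
  have "of_int \<lfloor>real (Suc j) * t\<rfloor> \<le> real (Suc j) * t" for j
    by linarith
  then show "\<forall>\<^sub>F j in sequentially. of_int \<lfloor>real (Suc j) * t\<rfloor> / real (Suc j) \<le> t"
    by (simp add: field_simps)
  show "(\<lambda>j. t - inverse (real (Suc j))) \<longlonglongrightarrow> t"
    using tendsto_diff[OF tendsto_const LIMSEQ_inverse_real_of_nat, of t] by simp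
qed simp

lemma rational_convex_weights_approx:
  fixes c :: "'i \<Rightarrow> real"
  assumes "finite J" "\<forall>k\<in>J. 0 \<le> c k" "sum c J = 1"
  obtains \<mu> :: "nat \<Rightarrow> 'i \<Rightarrow> real"
  where "\<And>j k. \<mu> j k \<in> \<rat>" "\<And>j k. k \<in> J \<Longrightarrow> 0 \<le> \<mu> j k" "\<And>j. sum (\<mu> j) J = 1"
    "\<And>k. (\<lambda>j. \<mu> j k) \<longlonglongrightarrow> c k"
proof
  \<comment> \<open>Round every weight down to a multiple of 1/(j+1) and spread the deficit evenly.\<close>
  define r :: "nat \<Rightarrow> real \<Rightarrow> real" where "r j t = of_int \<lfloor>real (Suc j) * t\<rfloor> / real (Suc j)" for j t
  define d where "d j = (1 - (\<Sum>i\<in>J. r j (c i))) / card J" for j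
  have "J \<noteq> {}" using assms(3) by auto
  then have card: "card J > 0" using assms(1) by (simp add: card_gt_0_iff)
  have "r j t \<le> t" for j t
  proof -
    have "of_int \<lfloor>real (Suc j) * t\<rfloor> \<le> real (Suc j) * t" by linarith
    then show ?thesis unfolding r_def by (simp add: field_simps)
  qed
  then have "(\<Sum>i\<in>J. r j (c i)) \<le> 1" for j
    using sum_mono[of J "\<lambda>i. r j (c i)" c] assms(3) by simp
  then have d_nonneg: "0 \<le> d j" for j
    unfolding d_def by simp
  show "r j (c k) + d j \<in> \<rat>" for j k
    unfolding d_def r_def by (intro Rats_add Rats_divide Rats_diff Rats_sum Rats_of_int Rats_of_nat Rats_1)
  show "0 \<le> r j (c k) + d j" if "k \<in> J" for j k
    using assms(2) that d_nonneg unfolding r_def by simp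
  show "(\<Sum>k\<in>J. r j (c k) + d j) = 1" for j
    using card unfolding d_def by (simp add: sum.distrib)
  have "(\<lambda>j. \<Sum>i\<in>J. r j (c i)) \<longlonglongrightarrow> (\<Sum>i\<in>J. c i)"
    unfolding r_def by (intro tendsto_sum floor_scaled_LIMSEQ)
  then have "d \<longlonglongrightarrow> (1 - 1) / card J"
    unfolding d_def assms(3) by (intro tendsto_divide tendsto_diff tendsto_const) (use card in auto)
  then show "(\<lambda>j. r j (c k) + d j) \<longlonglongrightarrow> c k" for k
    unfolding r_def using tendsto_add[OF floor_scaled_LIMSEQ] by fastforce
qed

lemma rational_weights_in_open:
  fixes a :: "'i \<Rightarrow> 'c::{real_vector,topological_space}"
  assumes add: "continuous_on UNIV (\<lambda>p::'c \<times> 'c. fst p + snd p)"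
    and scale: "continuous_on UNIV (\<lambda>p::real \<times> 'c. fst p *\<^sub>R snd p)"
    and "finite J" "\<forall>k\<in>J. 0 \<le> c k" "sum c J = 1"
    and "open V" "y - (\<Sum>k\<in>J. c k *\<^sub>R a k) \<in> V"
  obtains q where "\<forall>k\<in>J. q k \<in> \<rat> \<and> 0 \<le> q k" "sum q J = 1" "y - (\<Sum>k\<in>J. q k *\<^sub>R a k) \<in> V"
proof -
  obtain \<mu> where \<mu>: "\<And>j k. \<mu> j k \<in> \<rat>" "\<And>j k. k \<in> J \<Longrightarrow> 0 \<le> \<mu> j k" "\<And>j. sum (\<mu> j) J = 1"
    "\<And>k. (\<lambda>j. \<mu> j k) \<longlonglongrightarrow> c k"
    using rational_convex_weights_approx[OF assms(3-5)] by blast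
  have "(\<lambda>j. y - (\<Sum>k\<in>J. \<mu> j k *\<^sub>R a k)) \<longlonglongrightarrow> y - (\<Sum>k\<in>J. c k *\<^sub>R a k)"
    using tendsto_continuous_on_Pair[OF continuous_on_diff_of_add_scaleR[OF add scale] tendsto_const
        tendsto_sum_scaleR[OF add scale assms(3) \<mu>(4)]]
    by simp
  then have "\<forall>\<^sub>F j in sequentially. y - (\<Sum>k\<in>J. \<mu> j k *\<^sub>R a k) \<in> V"
    using assms(6,7) by (rule topological_tendstoD)
  then obtain j where "y - (\<Sum>k\<in>J. \<mu> j k *\<^sub>R a k) \<in> V"
    unfolding eventually_sequentially by blast
  then show thesis
    by (rule that[of "\<mu> j", rotated 2]) (use \<mu> in auto)
qed

lemma convex_hull_image_eq_weighted_sums: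
  fixes g :: "'i \<Rightarrow> 'c::real_vector"
  shows "convex hull (g ` K) =
    {\<Sum>k\<in>J. c k *\<^sub>R g k | J c. finite J \<and> J \<subseteq> K \<and> (\<forall>k\<in>J. 0 \<le> c k) \<and> sum c J = 1}"
proof (intro equalityI subsetI)
  fix a assume "a \<in> convex hull (g ` K)"
  then obtain S u where S: "finite S" "S \<subseteq> g ` K" "\<forall>v\<in>S. 0 \<le> u v" "sum u S = 1"
    and a: "a = (\<Sum>v\<in>S. u v *\<^sub>R v)"
    unfolding convex_hull_explicit by auto
  obtain J where J: "J \<subseteq> K" "inj_on g J" "S = g ` J"
    using S(2) unfolding subset_image_inj by blast
  then have "finite J" using S(1) finite_image_iff by blast
  moreover have "a = (\<Sum>k\<in>J. u (g k) *\<^sub>R g k)" "sum (\<lambda>k. u (g k)) J = 1"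
    using a S(4) J(2,3) by (simp_all add: sum.reindex)
  ultimately show "a \<in> {\<Sum>k\<in>J. c k *\<^sub>R g k | J c. finite J \<and> J \<subseteq> K \<and> (\<forall>k\<in>J. 0 \<le> c k) \<and> sum c J = 1}"
    by (intro CollectI exI[of _ J] exI[of _ "\<lambda>k. u (g k)"]) (use J S(3) in auto)
next
  fix a assume "a \<in> {\<Sum>k\<in>J. c k *\<^sub>R g k | J c. finite J \<and> J \<subseteq> K \<and> (\<forall>k\<in>J. 0 \<le> c k) \<and> sum c J = 1}"
  then obtain J c where J: "finite J" "J \<subseteq> K" "\<forall>k\<in>J. 0 \<le> c k" "sum c J = 1"
    and a: "a = (\<Sum>k\<in>J. c k *\<^sub>R g k)"
    by blast
  have "g k \<in> convex hull (g ` K)" if "k \<in> J" for k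
    using that J(2) by (blast intro: hull_inc)
  then show "a \<in> convex hull (g ` K)"
    unfolding a using J by (intro convex_sum convex_convex_hull) auto
qed

lemma borel_Sigma_weighted_sum_vimage_open:
  fixes F :: "'i \<Rightarrow> 'a::topological_space \<Rightarrow> 'c::{real_vector,metric_space}"
  assumes add: "continuous_on UNIV (\<lambda>p::'c \<times> 'c. fst p + snd p)"
    and scale: "continuous_on UNIV (\<lambda>p::real \<times> 'c. fst p *\<^sub>R snd p)"
    and "\<not> ord_zero \<alpha>" "finite J" "\<And>k. k \<in> J \<Longrightarrow> \<exists>\<beta><\<alpha>. baire_class \<beta> (F k)" "open V"
  shows "borel_Sigma \<alpha> {p. snd p - (\<Sum>k\<in>J. c k *\<^sub>R F k (fst p)) \<in> V}"
proof -
  obtain \<delta> where \<delta>: "\<delta> < \<alpha>" "\<And>k. k \<in> J \<Longrightarrow> baire_class \<delta> (F k)"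
    using ex_common_baire_class[OF assms(3,4)] assms(5) by blast
  have "baire_class \<delta> (\<lambda>x. \<Sum>k\<in>J. c k *\<^sub>R F k x)"
    by (rule baire_class_sum_scaleR[OF add scale assms(4) \<delta>(2)])
  from baire_class_precompose[OF this continuous_on_fst[OF continuous_on_id]]
  have "baire_class \<delta> (\<lambda>p::'a \<times> 'c. \<Sum>k\<in>J. c k *\<^sub>R F k (fst p))" .
  with baire_class_continuous[OF continuous_on_snd[OF continuous_on_id]]
  have "baire_class \<delta> (\<lambda>p::'a \<times> 'c. (snd p, \<Sum>k\<in>J. c k *\<^sub>R F k (fst p)))"
    by (rule baire_class_Pair)
  moreover have "open {q::'c \<times> 'c. fst q - snd q \<in> V}"
    using open_vimage[OF assms(6) continuous_on_diff_of_add_scaleR[OF add scale]]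
    by (simp add: vimage_def)
  ultimately have "borel_Sigma \<alpha> ((\<lambda>p. (snd p, \<Sum>k\<in>J. c k *\<^sub>R F k (fst p))) -` {q. fst q - snd q \<in> V})"
    by (rule baire_class_vimage_open[OF _ \<delta>(1)])
  then show ?thesis
    by (simp add: vimage_def)
qed

lemma mem_convex_hull_plus_open_iff_rational_weights:
  fixes g :: "'i \<Rightarrow> 'c::{real_vector,topological_space}"
  assumes add: "continuous_on UNIV (\<lambda>p::'c \<times> 'c. fst p + snd p)"
    and scale: "continuous_on UNIV (\<lambda>p::real \<times> 'c. fst p *\<^sub>R snd p)"
    and "open V"
  shows "y \<in> convex hull (g ` K) + V \<longleftrightarrow>
    (\<exists>J q. finite J \<and> J \<subseteq> K \<and> q \<in> J \<rightarrow>\<^sub>E \<rat> \<and> (\<forall>k\<in>J. 0 \<le> q k) \<and> sum q J = 1 \<and>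
      y - (\<Sum>k\<in>J. q k *\<^sub>R g k) \<in> V)"
proof
  assume "y \<in> convex hull (g ` K) + V"
  then obtain a v where a: "a \<in> convex hull (g ` K)" and "v \<in> V" "y = a + v"
    by (auto elim: set_plus_elim)
  from a obtain J c where J: "finite J" "J \<subseteq> K" "\<forall>k\<in>J. 0 \<le> c k" "sum c J = 1"
    and "a = (\<Sum>k\<in>J. c k *\<^sub>R g k)"
    unfolding convex_hull_image_eq_weighted_sums by blast
  with \<open>v \<in> V\<close> \<open>y = a + v\<close> have "y - (\<Sum>k\<in>J. c k *\<^sub>R g k) \<in> V"
    by simp
  then obtain q where "\<forall>k\<in>J. q k \<in> \<rat> \<and> 0 \<le> q k" "sum q J = 1" "y - (\<Sum>k\<in>J. q k *\<^sub>R g k) \<in> V"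
    by (rule rational_weights_in_open[OF add scale J(1,3,4) assms(3)])
  then show "\<exists>J q. finite J \<and> J \<subseteq> K \<and> q \<in> J \<rightarrow>\<^sub>E \<rat> \<and> (\<forall>k\<in>J. 0 \<le> q k) \<and> sum q J = 1 \<and>
      y - (\<Sum>k\<in>J. q k *\<^sub>R g k) \<in> V"
    using J(1,2) by (intro exI[of _ J] exI[of _ "restrict q J"]) auto
next
  assume "\<exists>J q. finite J \<and> J \<subseteq> K \<and> q \<in> J \<rightarrow>\<^sub>E \<rat> \<and> (\<forall>k\<in>J. 0 \<le> q k) \<and> sum q J = 1 \<and>
      y - (\<Sum>k\<in>J. q k *\<^sub>R g k) \<in> V"
  then obtain J q where "finite J" "J \<subseteq> K" "\<forall>k\<in>J. 0 \<le> q k" "sum q J = 1"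
    and V: "y - (\<Sum>k\<in>J. q k *\<^sub>R g k) \<in> V"
    by blast
  then have "(\<Sum>k\<in>J. q k *\<^sub>R g k) \<in> convex hull (g ` K)"
    unfolding convex_hull_image_eq_weighted_sums by blast
  from set_plus_intro[OF this V]
  show "y \<in> convex hull (g ` K) + V"
    by simp
qed

lemma borel_Sigma_convex_hull_plus_open:
  fixes F :: "'i \<Rightarrow> 'a::topological_space \<Rightarrow> 'c::{real_vector,metric_space}"
  assumes add: "continuous_on UNIV (\<lambda>p::'c \<times> 'c. fst p + snd p)"
    and scale: "continuous_on UNIV (\<lambda>p::real \<times> 'c. fst p *\<^sub>R snd p)"
    and "\<not> ord_zero \<alpha>" "countable K" "\<And>k. k \<in> K \<Longrightarrow> \<exists>\<beta><\<alpha>. baire_class \<beta> (F k)" "open V"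
  shows "borel_Sigma \<alpha> {p. snd p \<in> convex hull ((\<lambda>k. F k (fst p)) ` K) + V}"
proof -
  define W :: "('i set \<times> ('i \<Rightarrow> real)) set"
    where "W = {(J, q). finite J \<and> J \<subseteq> K \<and> q \<in> J \<rightarrow>\<^sub>E \<rat> \<and> (\<forall>k\<in>J. 0 \<le> q k) \<and> sum q J = 1}"
  have eq: "{p. snd p \<in> convex hull ((\<lambda>k. F k (fst p)) ` K) + V} =
      (\<Union>(J, q)\<in>W. {p. snd p - (\<Sum>k\<in>J. q k *\<^sub>R F k (fst p)) \<in> V})"
    unfolding W_def mem_convex_hull_plus_open_iff_rational_weights[OF add scale assms(6)] by blast
  have "countable W"
  proof (rule countable_subset)
    show "W \<subseteq> (SIGMA J:{J. finite J \<and> J \<subseteq> K}. J \<rightarrow>\<^sub>E \<rat>)"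
      unfolding W_def by auto
    show "countable (SIGMA J:{J. finite J \<and> J \<subseteq> K}. J \<rightarrow>\<^sub>E \<rat>)"
      using assms(4) by (intro countable_SIGMA countable_Collect_finite_subset countable_PiE countable_rat) auto
  qed
  have piece: "borel_Sigma \<alpha> {p. snd p - (\<Sum>k\<in>J. q k *\<^sub>R F k (fst p)) \<in> V}" if "(J, q) \<in> W" for J q
    using that assms(5) unfolding W_def
    by (intro borel_Sigma_weighted_sum_vimage_open[OF add scale assms(3) _ _ assms(6)]) auto
  show ?thesis
    unfolding eq by (rule borel_Sigma_UN_countable[OF assms(3) \<open>countable W\<close>]) (use piece in force)
qed

lemma convex_hull_plus_subset_convex:
  fixes S V :: "'c::{real_vector,metric_space} set"
  assumes translation: "\<And>x y z::'c. dist (x + z) (y + z) = dist x y"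
    and "convex W" "ball l r \<subseteq> W" "S \<subseteq> ball l (r / 2)" "V \<subseteq> ball 0 (r / 2)"
  shows "convex hull S + V \<subseteq> W"
proof
  fix y assume "y \<in> convex hull S + V"
  then obtain a v where a: "a \<in> convex hull S" and "v \<in> V" and y: "y = a + v"
    by (auto elim: set_plus_elim)
  have "v + s \<in> W" if "s \<in> S" for s
  proof -
    have "dist (v + s) s = dist v 0"
      using translation[where x=v and y=0 and z=s] by simp
    moreover have "dist v 0 < r / 2" "dist l s < r / 2"
      using \<open>v \<in> V\<close> \<open>s \<in> S\<close> assms(4,5) by (auto simp: dist_commute)
    moreover have "dist l (v + s) \<le> dist l s + dist s (v + s)"
      by (rule dist_triangle)
    ultimately have "dist l (v + s) < r"
      by (simp add: dist_commute)
    then show ?thesis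
      using assms(3) by auto
  qed
  then have "convex hull ((\<lambda>s. v + s) ` S) \<subseteq> W"
    using assms(2) by (intro hull_minimal) auto
  moreover have "v + a \<in> convex hull ((\<lambda>s. v + s) ` S)"
    using a by (simp add: convex_hull_translation)
  ultimately have "v + a \<in> W"
    by blast
  then show "y \<in> W"
    using y by (simp add: add.commute)
qed

lemma eventually_convex_hull_tail_plus_subset_ball:
  fixes u :: "nat \<Rightarrow> 'c::{real_vector,metric_space}"
  assumes translation: "\<And>x y z::'c. dist (x + z) (y + z) = dist x y"
    and locally_convex: "\<And>U x. open U \<Longrightarrow> (x::'c) \<in> U \<Longrightarrow> \<exists>W. open W \<and> convex W \<and> x \<in> W \<and> W \<subseteq> U"
    and "u \<longlonglongrightarrow> l" "\<And>n. V n \<subseteq> ball 0 (inverse (real (Suc n)))" "e > 0"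
  shows "\<forall>\<^sub>F n in sequentially. convex hull (u ` {n..}) + V n \<subseteq> ball l e"
proof -
  obtain W where W: "open W" "convex W" "l \<in> W" "W \<subseteq> ball l e"
    using locally_convex[of "ball l e" l] \<open>e > 0\<close> by auto
  obtain r where r: "r > 0" "ball l r \<subseteq> W"
    using W(1,3) open_contains_ball by blast
  obtain M where M: "\<And>k. k \<ge> M \<Longrightarrow> dist (u k) l < r / 2"
    using \<open>u \<longlonglongrightarrow> l\<close> r(1) unfolding tendsto_iff eventually_sequentially by (meson half_gt_zero)
  obtain N where N: "inverse (real (Suc N)) < r / 2"
    using reals_Archimedean r(1) by (metis half_gt_zero)
  have "convex hull (u ` {n..}) + V n \<subseteq> W" if "n \<ge> max M N" for n
  proof (rule convex_hull_plus_subset_convex[OF translation W(2) r(2)])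
    show "u ` {n..} \<subseteq> ball l (r / 2)"
      using M that by (auto simp: dist_commute)
    have "inverse (real (Suc n)) \<le> inverse (real (Suc N))"
      using that by (simp add: field_simps)
    then have "ball 0 (inverse (real (Suc n))) \<subseteq> ball (0::'c) (r / 2)"
      using N by (intro subset_ball) linarith
    then show "V n \<subseteq> ball 0 (r / 2)"
      using assms(4)[of n] by blast
  qed
  then show ?thesis
    using W(4) unfolding eventually_sequentially by blast
qed

lemma limit_mem_convex_hull_tail_plus:
  fixes u :: "nat \<Rightarrow> 'c::{real_vector,metric_space}"
  assumes translation: "\<And>x y z::'c. dist (x + z) (y + z) = dist x y"
    and "u \<longlonglongrightarrow> l" "open V" "0 \<in> V"
  shows "l \<in> convex hull (u ` {n..}) + V"
proof -
  obtain r where r: "r > 0" "ball 0 r \<subseteq> V"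
    using assms(3,4) open_contains_ball by blast
  obtain K where "\<forall>k\<ge>K. dist (u k) l < r"
    using assms(2) r(1) unfolding tendsto_iff eventually_sequentially by blast
  then have "dist (u (n + K)) l < r"
    by simp
  moreover have "dist (l - u (n + K)) 0 = dist l (u (n + K))"
    using translation[where x="l - u (n + K)" and y=0 and z="u (n + K)"] by simp
  ultimately have "l - u (n + K) \<in> V"
    using r(2) by (auto simp: dist_commute)
  moreover have "u (n + K) \<in> convex hull (u ` {n..})"
    by (intro hull_inc) auto
  ultimately have "u (n + K) + (l - u (n + K)) \<in> convex hull (u ` {n..}) + V"
    by (rule set_plus_intro[rotated])
  then show ?thesis
    by simp
qed

lemma ex_convex_open_nbhds_zero_shrinking:
  assumes locally_convex: "\<And>U x. open U \<Longrightarrow> (x::'c) \<in> U \<Longrightarrow>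
      \<exists>W. open W \<and> convex W \<and> x \<in> W \<and> W \<subseteq> U"
  obtains V :: "nat \<Rightarrow> 'c::{real_vector,metric_space} set"
  where "\<And>n. open (V n)" "\<And>n. convex (V n)" "\<And>n. 0 \<in> V n"
    "\<And>n. V n \<subseteq> ball 0 (inverse (real (Suc n)))"
proof -
  have "\<forall>n. \<exists>W. open W \<and> convex W \<and> (0::'c) \<in> W \<and> W \<subseteq> ball 0 (inverse (real (Suc n)))"
  proof
    fix n
    show "\<exists>W. open W \<and> convex W \<and> (0::'c) \<in> W \<and> W \<subseteq> ball 0 (inverse (real (Suc n)))"
      by (rule locally_convex) simp_all
  qed
  from choice[OF this] obtain V :: "nat \<Rightarrow> 'c set"
    where "\<forall>n. open (V n) \<and> convex (V n) \<and> 0 \<in> V n \<and> V n \<subseteq> ball 0 (inverse (real (Suc n)))"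
    by blast
  then show thesis
    using that by blast
qed

lemma baire_class_Sigma_strip_approximation:
  fixes f :: "'a::topological_space \<Rightarrow> 'c::{real_vector,metric_space}"
  assumes translation: "\<And>x y z::'c. dist (x + z) (y + z) = dist x y"
    and add: "continuous_on UNIV (\<lambda>p::'c \<times> 'c. fst p + snd p)"
    and scale: "continuous_on UNIV (\<lambda>p::real \<times> 'c. fst p *\<^sub>R snd p)"
    and locally_convex: "\<And>U x. open U \<Longrightarrow> (x::'c) \<in> U \<Longrightarrow> \<exists>W. open W \<and> convex W \<and> x \<in> W \<and> W \<subseteq> U"
    and "\<not> ord_zero \<alpha>" "baire_class \<alpha> f"
  shows "\<exists>G :: nat \<Rightarrow> ('a \<times> 'c) set. (\<forall>n. Sigma_strip \<alpha> (G n)) \<and> (\<Inter>n. G n) = graph f \<and>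
           (\<forall>x. (\<lambda>n. diam (xsection (G n) x)) \<longlonglongrightarrow> 0)"
proof -
  obtain F :: "nat \<Rightarrow> 'a \<Rightarrow> 'c" where F: "\<forall>n. \<exists>\<beta><\<alpha>. baire_class \<beta> (F n)"
    and lim: "\<forall>x. (\<lambda>n. F n x) \<longlonglongrightarrow> f x"
    using assms(6,5) by cases auto
  obtain V :: "nat \<Rightarrow> 'c set" where V: "\<And>n. open (V n)" "\<And>n. convex (V n)" "\<And>n. 0 \<in> V n"
    "\<And>n. V n \<subseteq> ball 0 (inverse (real (Suc n)))"
    using ex_convex_open_nbhds_zero_shrinking[OF locally_convex] by blast
  define G where "G n = {p. snd p \<in> convex hull ((\<lambda>k. F k (fst p)) ` {n..}) + V n}" for n
  have xsection: "xsection (G n) x = convex hull ((\<lambda>k. F k x) ` {n..}) + V n" for n x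
    unfolding G_def xsection_def by simp
  have "borel_Sigma \<alpha> (G n)" for n
    unfolding G_def by (rule borel_Sigma_convex_hull_plus_open[OF add scale assms(5) _ _ V(1)]) (use F in auto)
  moreover have "convex (xsection (G n) x)" for n x
    unfolding xsection by (intro convex_set_plus convex_convex_hull V(2))
  ultimately have strip: "Sigma_strip \<alpha> (G n)" for n
    unfolding Sigma_strip_def by blast
  have graph: "(x, f x) \<in> G n" for n x
    unfolding G_def using limit_mem_convex_hull_tail_plus[OF translation lim[rule_format] V(1,3)] by simp
  have shrink: "\<forall>\<^sub>F n in sequentially. xsection (G n) x \<subseteq> ball (f x) e" if "e > 0" for x e
    unfolding xsection
    by (rule eventually_convex_hull_tail_plus_subset_ball[OF translation locally_convex lim[rule_format] V(4) that])
  show ?thesis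
  proof (intro exI conjI allI)
    show "Sigma_strip \<alpha> (G n)" for n
      by (rule strip)
    show "(\<Inter>n. G n) = graph f"
      using graph shrink by (rule Inter_eq_graphI)
    show "(\<lambda>n. diam (xsection (G n) x)) \<longlonglongrightarrow> 0" for x
      using shrink by (rule diam_xsection_tendsto_zero)
  qed
qed

theorem theorem1p6:
  fixes \<alpha> :: "'o::wellorder"
  assumes "countable_ordinal \<alpha>" and "\<not> ord_zero \<alpha>"
  shows "(\<forall>f :: 'a::topological_space \<Rightarrow> 'b::metric_space. baire_class \<alpha> f \<longrightarrow>
            (\<exists>G :: nat \<Rightarrow> ('a \<times> 'b) set. (\<forall>n. borel_Sigma \<alpha> (G n)) \<and> (\<Inter>n. G n) = graph f \<and>
               (\<forall>x. (\<lambda>n. diam (xsection (G n) x)) \<longlonglongrightarrow> 0)))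
       \<and> (\<forall>f :: 'a \<Rightarrow> 'c::{real_vector, complete_space}. frechet_space TYPE('c) \<and> baire_class \<alpha> f \<longrightarrow>
            (\<exists>G :: nat \<Rightarrow> ('a \<times> 'c) set. (\<forall>n. Sigma_strip \<alpha> (G n)) \<and> (\<Inter>n. G n) = graph f \<and>
               (\<forall>x. (\<lambda>n. diam (xsection (G n) x)) \<longlonglongrightarrow> 0)))"
proof (intro conjI allI impI)
  fix f :: "'a \<Rightarrow> 'b"
  assume "baire_class \<alpha> f"
  then show "\<exists>G :: nat \<Rightarrow> ('a \<times> 'b) set. (\<forall>n. borel_Sigma \<alpha> (G n)) \<and> (\<Inter>n. G n) = graph f \<and>
               (\<forall>x. (\<lambda>n. diam (xsection (G n) x)) \<longlonglongrightarrow> 0)"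
    by (rule baire_class_Sigma_graph_approximation[OF assms(2)])
next
  fix f :: "'a \<Rightarrow> 'c"
  assume "frechet_space TYPE('c) \<and> baire_class \<alpha> f"
  then show "\<exists>G :: nat \<Rightarrow> ('a \<times> 'c) set. (\<forall>n. Sigma_strip \<alpha> (G n)) \<and> (\<Inter>n. G n) = graph f \<and>
               (\<forall>x. (\<lambda>n. diam (xsection (G n) x)) \<longlonglongrightarrow> 0)"
    unfolding frechet_space_def
    by (intro baire_class_Sigma_strip_approximation[OF _ _ _ _ assms(2)]) blast+
qed

end
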